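(* Let $R$ be a finitely generated $\mathbb{N}^s$-graded algebra over a commutative ring $A$, and let $M$ be a finitely generated $\mathbb{Z}^s$-graded $R$-module. Then either $M_t=0$ for $t\gg 0$, or $M_t\neq 0$ for $t\gg 0$.
   Context: For a property depending on $t\in\mathbb{Z}^s$, "the property holds for $t\gg 0$" means that there exists $t_0\in\mathbb{Z}^s$ such that it holds for all $t\in t_0+\mathbb{N}^s$. *)

theory Defs
  imports Main
begin

text \<open>Multidegrees: elements of N^s are functions 's => nat, elements of Z^s are
functions 's => int, where 's is a finite index type with CARD('s) = s.\<close>

definition unit_deg :: "'s \<Rightarrow> ('s \<Rightarrow> nat)" where
  "unit_deg i = (\<lambda>j. if j = i then 1 else 0)"

definition is_ring_hom :: "('a::comm_ring_1 \<Rightarrow> 'r::comm_ring_1) \<Rightarrow> bool" where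
  "is_ring_hom \<phi> \<longleftrightarrow> \<phi> 1 = 1 \<and> (\<forall>a b. \<phi> (a + b) = \<phi> a + \<phi> b) \<and> (\<forall>a b. \<phi> (a * b) = \<phi> a * \<phi> b)"

definition is_module_action :: "('r::comm_ring_1 \<Rightarrow> 'm::ab_group_add \<Rightarrow> 'm) \<Rightarrow> bool" where
  "is_module_action act \<longleftrightarrow>
     (\<forall>r s m. act (r + s) m = act r m + act s m) \<and>
     (\<forall>r m n. act r (m + n) = act r m + act r n) \<and>
     (\<forall>r s m. act (r * s) m = act r (act s m)) \<and>
     (\<forall>m. act 1 m = m)"

definition graded_algebra ::
  "('a::comm_ring_1 \<Rightarrow> 'r::comm_ring_1) \<Rightarrow> (('s \<Rightarrow> nat) \<Rightarrow> 'r set) \<Rightarrow> bool" where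
  "graded_algebra \<phi> Rg \<longleftrightarrow>
     is_ring_hom \<phi> \<and>
     (\<forall>d. 0 \<in> Rg d \<and> (\<forall>x\<in>Rg d. \<forall>y\<in>Rg d. x + y \<in> Rg d \<and> - x \<in> Rg d)) \<and>
     (\<forall>d e. \<forall>x\<in>Rg d. \<forall>y\<in>Rg e. x * y \<in> Rg (\<lambda>i. d i + e i)) \<and>
     range \<phi> \<subseteq> Rg (\<lambda>_. 0) \<and>
     (\<forall>x. \<exists>D f. finite D \<and> (\<forall>d\<in>D. f d \<in> Rg d) \<and> x = sum f D) \<and>
     (\<forall>D f. finite D \<and> (\<forall>d\<in>D. f d \<in> Rg d) \<and> sum f D = 0 \<longrightarrow> (\<forall>d\<in>D. f d = 0))"

inductive_set alg_gen :: "('a::comm_ring_1 \<Rightarrow> 'r::comm_ring_1) \<Rightarrow> 'r set \<Rightarrow> 'r set"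
  for \<phi> G where
  base: "\<phi> a \<in> alg_gen \<phi> G"
| gen: "g \<in> G \<Longrightarrow> g \<in> alg_gen \<phi> G"
| add: "x \<in> alg_gen \<phi> G \<Longrightarrow> y \<in> alg_gen \<phi> G \<Longrightarrow> x + y \<in> alg_gen \<phi> G"
| mult: "x \<in> alg_gen \<phi> G \<Longrightarrow> y \<in> alg_gen \<phi> G \<Longrightarrow> x * y \<in> alg_gen \<phi> G"
| neg: "x \<in> alg_gen \<phi> G \<Longrightarrow> - x \<in> alg_gen \<phi> G"

definition fg_standard_graded_algebra ::
  "('a::comm_ring_1 \<Rightarrow> 'r::comm_ring_1) \<Rightarrow> (('s \<Rightarrow> nat) \<Rightarrow> 'r set) \<Rightarrow> bool" where
  "fg_standard_graded_algebra \<phi> Rg \<longleftrightarrow>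
     graded_algebra \<phi> Rg \<and>
     (\<exists>G. finite G \<and> (\<forall>g\<in>G. \<exists>i. g \<in> Rg (unit_deg i)) \<and> alg_gen \<phi> G = UNIV)"

definition graded_module ::
  "(('s \<Rightarrow> nat) \<Rightarrow> 'r::comm_ring_1 set) \<Rightarrow> ('r \<Rightarrow> 'm::ab_group_add \<Rightarrow> 'm)
     \<Rightarrow> (('s \<Rightarrow> int) \<Rightarrow> 'm set) \<Rightarrow> bool" where
  "graded_module Rg act Mg \<longleftrightarrow>
     is_module_action act \<and>
     (\<forall>t. 0 \<in> Mg t \<and> (\<forall>x\<in>Mg t. \<forall>y\<in>Mg t. x + y \<in> Mg t \<and> - x \<in> Mg t)) \<and>
     (\<forall>d t. \<forall>r\<in>Rg d. \<forall>m\<in>Mg t. act r m \<in> Mg (\<lambda>i. int (d i) + t i)) \<and>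
     (\<forall>m. \<exists>D f. finite D \<and> (\<forall>t\<in>D. f t \<in> Mg t) \<and> m = sum f D) \<and>
     (\<forall>D f. finite D \<and> (\<forall>t\<in>D. f t \<in> Mg t) \<and> sum f D = 0 \<longrightarrow> (\<forall>t\<in>D. f t = 0))"

definition fin_gen_module :: "('r::comm_ring_1 \<Rightarrow> 'm::ab_group_add \<Rightarrow> 'm) \<Rightarrow> bool" where
  "fin_gen_module act \<longleftrightarrow>
     (\<exists>G. finite G \<and> (\<forall>m. \<exists>c. m = (\<Sum>g\<in>G. act (c g) g)))"

end

theory Submission
  imports Defs "HOL.Modules"
begin

text \<open>Since \<open>R\<close> is generated over \<open>R\<^sub>0\<close> by elements of the unit degrees \<open>e\<^sub>i\<close>, a homogeneous
\<open>r \<in> R\<^sub>d\<close> lies in the ideal generated by \<open>R\<^sub>b\<close> for every \<open>b \<le> d\<close>. Split the finitely many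
generators of \<open>M\<close> into homogeneous components and let \<open>t\<^sub>0\<close> bound their degrees. Suppose
\<open>M\<^sub>t = 0\<close> for some \<open>t \<ge> t\<^sub>0\<close> and let \<open>t' \<ge> t\<close>. An element of \<open>M\<^sub>t\<^sub>'\<close> is the degree \<open>t'\<close> part of a
sum of products \<open>r n\<close> with \<open>r \<in> R\<^sub>d\<close> and \<open>n \<in> M\<^sub>u\<close> a component of a generator; when \<open>d + u = t'\<close>
we have \<open>t - u \<le> d\<close>, so \<open>r n \<in> R R\<^sub>t\<^sub>-\<^sub>u M\<^sub>u \<subseteq> R M\<^sub>t = 0\<close>. Hence \<open>M\<^sub>t\<^sub>' = 0\<close>, and either \<open>M\<^sub>t = 0\<close> for
all large \<open>t\<close>, or \<open>M\<^sub>t \<noteq> 0\<close> for all \<open>t \<ge> t\<^sub>0\<close>.\<close>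

text \<open>Ideals are the submodules of a ring over itself: \<open>ideal.span S\<close> is the ideal generated by \<open>S\<close>.
The rule \<open>ideal.scale_scale\<close> is associativity read backwards and loops against \<open>mult.assoc\<close>.\<close>

interpretation ideal: module "(*) :: 'a::comm_ring_1 \<Rightarrow> 'a \<Rightarrow> 'a"
  by standard (simp_all add: algebra_simps)

declare ideal.scale_scale [simp del]

lemma ideal_span_mult:
  fixes x y :: "'a::comm_ring_1"
  assumes x: "x \<in> ideal.span S" and y: "y \<in> ideal.span T"
    and ST: "\<And>a b. a \<in> S \<Longrightarrow> b \<in> T \<Longrightarrow> a * b \<in> U"
  shows "x * y \<in> ideal.span U"
proof -
  have ay: "a * y \<in> ideal.span U" if a: "a \<in> S" for a
    using y
  proof (induction rule: ideal.span_induct_alt)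
    case base
    show ?case using ideal.span_zero by simp
  next
    case (step c b z)
    have "c * (a * b) + a * z \<in> ideal.span U"
      using step ST[OF a] by (blast intro: ideal.span_add ideal.span_scale ideal.span_base)
    then show ?case by (simp add: algebra_simps)
  qed
  show ?thesis
    using x
  proof (induction rule: ideal.span_induct_alt)
    case base
    show ?case using ideal.span_zero by simp
  next
    case (step c a z)
    have "c * (a * y) + z * y \<in> ideal.span U"
      using step ay by (blast intro: ideal.span_add ideal.span_scale)
    then show ?case by (simp add: algebra_simps)
  qed
qed

lemma module_action_module: "is_module_action act \<Longrightarrow> module act"
  unfolding is_module_action_def by unfold_locales auto

lemma (in module) ideal_span_scale_eq_zero:
  assumes c: "c \<in> ideal.span S" and S: "\<And>y. y \<in> S \<Longrightarrow> y *s n = 0"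
  shows "c *s n = 0"
  using c
proof (induction rule: ideal.span_induct_alt)
  case base
  show ?case by simp
next
  case (step a y z)
  then show ?case by (simp add: scale_left_distrib S flip: scale_scale)
qed

definition hom_in_lower_ideals :: "(('s \<Rightarrow> nat) \<Rightarrow> 'r::comm_ring_1 set) \<Rightarrow> ('s \<Rightarrow> nat) \<Rightarrow> 'r set" where
  "hom_in_lower_ideals Rg d = {x \<in> Rg d. \<forall>b \<le> d. x \<in> ideal.span (Rg b)}"

inductive_set sums_hom_in_lower_ideals :: "(('s \<Rightarrow> nat) \<Rightarrow> 'r::comm_ring_1 set) \<Rightarrow> 'r set"
  for Rg where
  hom: "x \<in> hom_in_lower_ideals Rg d \<Longrightarrow> x \<in> sums_hom_in_lower_ideals Rg"
| add: "x \<in> sums_hom_in_lower_ideals Rg \<Longrightarrow> y \<in> sums_hom_in_lower_ideals Rg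
    \<Longrightarrow> x + y \<in> sums_hom_in_lower_ideals Rg"

lemma graded_algebraD:
  assumes "graded_algebra \<phi> Rg"
  shows "\<phi> 1 = 1"
    and "\<phi> a \<in> Rg (\<lambda>_. 0)"
    and "x \<in> Rg d \<Longrightarrow> - x \<in> Rg d"
    and "x \<in> Rg d \<Longrightarrow> y \<in> Rg e \<Longrightarrow> x * y \<in> Rg (\<lambda>i. d i + e i)"
  using assms unfolding graded_algebra_def is_ring_hom_def by auto

lemma graded_algebra_one: "graded_algebra \<phi> Rg \<Longrightarrow> 1 \<in> Rg (\<lambda>_. 0)"
  using graded_algebraD(1,2) by metis

lemma graded_algebra_ideal_span_deg_zero:
  "graded_algebra \<phi> Rg \<Longrightarrow> x \<in> ideal.span (Rg (\<lambda>_. 0))"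
  using ideal.span_scale[OF ideal.span_base[OF graded_algebra_one], of \<phi> Rg x] by simp

lemma hom_in_lower_ideals_neg:
  "graded_algebra \<phi> Rg \<Longrightarrow> x \<in> hom_in_lower_ideals Rg d \<Longrightarrow> - x \<in> hom_in_lower_ideals Rg d"
  unfolding hom_in_lower_ideals_def by (auto intro: ideal.span_neg graded_algebraD(3))

lemma hom_in_lower_ideals_mult:
  assumes R: "graded_algebra \<phi> Rg"
    and x: "x \<in> hom_in_lower_ideals Rg d" and y: "y \<in> hom_in_lower_ideals Rg e"
  shows "x * y \<in> hom_in_lower_ideals Rg (\<lambda>i. d i + e i)"
proof -
  note mult = graded_algebraD(4)[OF R]
  have "x * y \<in> ideal.span (Rg b)" if b: "b \<le> (\<lambda>i. d i + e i)" for b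
  proof -
    define b1 where "b1 = (\<lambda>i. min (b i) (d i))"
    define b2 where "b2 = (\<lambda>i. b i - b1 i)"
    have "b1 \<le> d" "b2 \<le> e"
      using b unfolding le_fun_def b1_def b2_def by (auto simp: min_def le_diff_conv add.commute)
    then have "x \<in> ideal.span (Rg b1)" "y \<in> ideal.span (Rg b2)"
      using x y unfolding hom_in_lower_ideals_def by blast+
    moreover have "(\<lambda>i. b1 i + b2 i) = b"
      by (simp add: b1_def b2_def fun_eq_iff)
    ultimately show ?thesis
      using ideal_span_mult[where U = "Rg b"] mult by metis
  qed
  moreover have "x * y \<in> Rg (\<lambda>i. d i + e i)"
    using x y mult unfolding hom_in_lower_ideals_def by blast
  ultimately show ?thesis
    unfolding hom_in_lower_ideals_def by blast
qed

lemma sums_hom_in_lower_ideals_neg: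
  assumes "graded_algebra \<phi> Rg" and "x \<in> sums_hom_in_lower_ideals Rg"
  shows "- x \<in> sums_hom_in_lower_ideals Rg"
  using assms(2)
proof induction
  case (hom x d)
  then show ?case
    using hom_in_lower_ideals_neg[OF assms(1)] by (blast intro: sums_hom_in_lower_ideals.hom)
next
  case (add x y)
  then show ?case
    using sums_hom_in_lower_ideals.add[of "- x" Rg "- y"] by simp
qed

lemma sums_hom_in_lower_ideals_mult:
  assumes R: "graded_algebra \<phi> Rg"
    and x: "x \<in> sums_hom_in_lower_ideals Rg" and y: "y \<in> sums_hom_in_lower_ideals Rg"
  shows "x * y \<in> sums_hom_in_lower_ideals Rg"
  using x
proof induction
  case (hom x d)
  show ?case
    using y
  proof induction
    case (hom y e)
    then show ?case
      using hom_in_lower_ideals_mult[OF R \<open>x \<in> _\<close>] by (blast intro: sums_hom_in_lower_ideals.hom)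
  next
    case (add y y')
    then show ?case by (simp add: distrib_left sums_hom_in_lower_ideals.add)
  qed
next
  case (add x x')
  then show ?case by (simp add: distrib_right sums_hom_in_lower_ideals.add)
qed

lemma le_zero_fun_iff: "b \<le> (\<lambda>_. 0 :: nat) \<longleftrightarrow> b = (\<lambda>_. 0)"
  by (auto simp: le_fun_def)

lemma le_unit_deg: "b \<le> unit_deg i \<Longrightarrow> b = (\<lambda>_. 0) \<or> b = unit_deg i"
proof -
  assume b: "b \<le> unit_deg i"
  then have "b j = 0" if "j \<noteq> i" for j
    using that by (auto simp: le_fun_def unit_deg_def dest: spec[of _ j])
  moreover have "b i = 0 \<or> b i = 1"
    using b by (auto simp: le_fun_def unit_deg_def dest: spec[of _ i])
  ultimately show ?thesis
    unfolding fun_eq_iff unit_deg_def by metis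
qed

lemma standard_graded_algebra_eq_sums_hom_in_lower_ideals:
  assumes "fg_standard_graded_algebra \<phi> Rg"
  shows "sums_hom_in_lower_ideals Rg = UNIV"
proof -
  obtain G where G: "\<And>g. g \<in> G \<Longrightarrow> \<exists>i. g \<in> Rg (unit_deg i)" and gen: "alg_gen \<phi> G = UNIV"
    using assms unfolding fg_standard_graded_algebra_def by blast
  have R: "graded_algebra \<phi> Rg"
    using assms unfolding fg_standard_graded_algebra_def by blast
  have "x \<in> sums_hom_in_lower_ideals Rg" if "x \<in> alg_gen \<phi> G" for x
    using that
  proof induction
    case (base a)
    have "\<phi> a \<in> hom_in_lower_ideals Rg (\<lambda>_. 0)"
      using graded_algebraD(2)[OF R] graded_algebra_ideal_span_deg_zero[OF R]
      by (auto simp: hom_in_lower_ideals_def le_zero_fun_iff)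
    then show ?case by (rule sums_hom_in_lower_ideals.hom)
  next
    case (gen g)
    then obtain i where "g \<in> Rg (unit_deg i)" using G by blast
    moreover have "g \<in> ideal.span (Rg b)" if "b \<le> unit_deg i" for b
      using le_unit_deg[OF that] graded_algebra_ideal_span_deg_zero[OF R] \<open>g \<in> Rg (unit_deg i)\<close>
      by (auto intro: ideal.span_base)
    ultimately have "g \<in> hom_in_lower_ideals Rg (unit_deg i)"
      by (simp add: hom_in_lower_ideals_def)
    then show ?case by (rule sums_hom_in_lower_ideals.hom)
  next
    case (add x y)
    then show ?case by (blast intro: sums_hom_in_lower_ideals.add)
  next
    case (mult x y)
    then show ?case by (blast intro: sums_hom_in_lower_ideals_mult[OF R])
  next
    case (neg x)
    then show ?case by (blast intro: sums_hom_in_lower_ideals_neg[OF R])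
  qed
  then show ?thesis using gen by blast
qed

definition subgroup_family :: "('k \<Rightarrow> 'v::ab_group_add set) \<Rightarrow> bool" where
  "subgroup_family X \<longleftrightarrow> (\<forall>t. 0 \<in> X t \<and> (\<forall>x\<in>X t. \<forall>y\<in>X t. x + y \<in> X t \<and> - x \<in> X t))"

definition independent_family :: "('k \<Rightarrow> 'v::comm_monoid_add set) \<Rightarrow> bool" where
  "independent_family X \<longleftrightarrow>
     (\<forall>D f. finite D \<and> (\<forall>t\<in>D. f t \<in> X t) \<and> sum f D = 0 \<longrightarrow> (\<forall>t\<in>D. f t = 0))"

text \<open>For an independent family these are the elements whose homogeneous component of degree
\<open>t\<close> vanishes.\<close>

definition off_component :: "('k \<Rightarrow> 'v::comm_monoid_add set) \<Rightarrow> 'k \<Rightarrow> 'v set" where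
  "off_component X t = {m. \<exists>D f. finite D \<and> t \<notin> D \<and> (\<forall>w\<in>D. f w \<in> X w) \<and> m = sum f D}"

lemma off_component_zero: "0 \<in> off_component X t"
  unfolding off_component_def by (intro CollectI exI[of _ "{}"]) simp

lemma off_componentI: "w \<noteq> t \<Longrightarrow> m \<in> X w \<Longrightarrow> m \<in> off_component X t"
  unfolding off_component_def by (intro CollectI exI[of _ "{w}"] exI[of _ "\<lambda>_. m"]) simp

lemma off_component_add:
  assumes X: "subgroup_family X"
    and m: "m \<in> off_component X t" and m': "m' \<in> off_component X t"
  shows "m + m' \<in> off_component X t"
proof -
  obtain D f where D: "finite D" "t \<notin> D" "\<forall>w\<in>D. f w \<in> X w" "m = sum f D"
    using m unfolding off_component_def by blast
  obtain D' f' where D': "finite D'" "t \<notin> D'" "\<forall>w\<in>D'. f' w \<in> X w" "m' = sum f' D'"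
    using m' unfolding off_component_def by blast
  define g where "g w = (if w \<in> D then f w else 0) + (if w \<in> D' then f' w else 0)" for w
  have "\<forall>w\<in>D \<union> D'. g w \<in> X w"
    using X D(3) D'(3) unfolding subgroup_family_def g_def by auto
  moreover have "m + m' = sum g (D \<union> D')"
    using D(1,4) D'(1,4)
    by (simp add: g_def sum.distrib flip: sum.inter_restrict)
  ultimately show ?thesis
    using D D' unfolding off_component_def by blast
qed

lemma off_component_sum:
  assumes "subgroup_family X" and "finite A" and "\<And>a. a \<in> A \<Longrightarrow> h a \<in> off_component X t"
  shows "sum h A \<in> off_component X t"
  using assms(2,3)
  by induction (simp_all add: off_component_zero off_component_add[OF assms(1)])

lemma independent_off_component_eq_zero:
  assumes X: "subgroup_family X" "independent_family X"
    and m: "m \<in> X t" "m \<in> off_component X t"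
  shows "m = 0"
proof -
  obtain D f where D: "finite D" "t \<notin> D" "\<forall>w\<in>D. f w \<in> X w" "m = sum f D"
    using m(2) unfolding off_component_def by blast
  define g where "g = f(t := - m)"
  have "\<forall>w\<in>insert t D. g w \<in> X w"
    using X(1) m(1) D(3) unfolding subgroup_family_def g_def by auto
  moreover have "sum g D = m"
    unfolding D(4) g_def using D(2) by (intro sum.cong) auto
  then have "sum g (insert t D) = 0"
    using D(1,2) by (simp add: g_def)
  ultimately have "g t = 0"
    using X(2) D(1) unfolding independent_family_def by blast
  then show ?thesis by (simp add: g_def)
qed

lemma graded_moduleD:
  assumes "graded_module Rg act Mg"
  shows "module act" and "subgroup_family Mg" and "independent_family Mg"
    and "r \<in> Rg d \<Longrightarrow> n \<in> Mg u \<Longrightarrow> act r n \<in> Mg (\<lambda>i. int (d i) + u i)"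
    and "\<exists>D f. finite D \<and> (\<forall>u\<in>D. f u \<in> Mg u) \<and> m = sum f D"
  using assms module_action_module
  unfolding graded_module_def subgroup_family_def independent_family_def by auto

lemma act_off_component_above_vanishing:
  assumes M: "graded_module Rg act Mg"
    and x: "x \<in> sums_hom_in_lower_ideals Rg" and n: "n \<in> Mg u"
    and ut: "u \<le> t" and tt': "t \<le> t'" and vanish: "Mg t = {0}"
  shows "act x n \<in> off_component Mg t'"
  using x
proof induction
  case (hom x d)
  then have x: "x \<in> Rg d" "\<And>b. b \<le> d \<Longrightarrow> x \<in> ideal.span (Rg b)"
    by (simp_all add: hom_in_lower_ideals_def)
  show ?case
  proof (cases "(\<lambda>i. int (d i) + u i) = t'")
    case True
    define b where "b = (\<lambda>i. nat (t i - u i))"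
    have bu: "(\<lambda>i. int (b i) + u i) = t"
      using ut by (auto simp: b_def le_fun_def)
    have "b i \<le> d i" for i
      using fun_cong[OF True, of i] le_funD[OF tt', of i] by (simp add: b_def nat_le_iff)
    then have "x \<in> ideal.span (Rg b)"
      by (intro x(2)) (simp add: le_fun_def)
    moreover have "act y n = 0" if "y \<in> Rg b" for y
      using graded_moduleD(4)[OF M, OF that n] vanish bu by simp
    ultimately have "act x n = 0"
      by (rule module.ideal_span_scale_eq_zero[OF graded_moduleD(1)[OF M]])
    then show ?thesis by (simp add: off_component_zero)
  next
    case False
    with graded_moduleD(4)[OF M, OF x(1) n] show ?thesis
      by (intro off_componentI[where X = Mg])
  qed
next
  case (add x y)
  show ?case
    unfolding module.scale_left_distrib[OF graded_moduleD(1)[OF M]]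
    by (rule off_component_add[OF graded_moduleD(2)[OF M] add.IH])
qed

lemma fg_graded_module_vanishing_propagates:
  assumes R: "fg_standard_graded_algebra \<phi> Rg" and M: "graded_module Rg act Mg"
    and fg: "fin_gen_module act"
  obtains t0 where "\<And>t t'. t0 \<le> t \<Longrightarrow> t \<le> t' \<Longrightarrow> Mg t = {0} \<Longrightarrow> Mg t' = {0}"
proof -
  obtain GM where GM: "finite GM" and gens: "\<And>m. \<exists>c. m = (\<Sum>g\<in>GM. act (c g) g)"
    using fg unfolding fin_gen_module_def by blast
  obtain DM FM where DM: "\<And>g. finite (DM g)" "\<And>g u. u \<in> DM g \<Longrightarrow> FM g u \<in> Mg u"
    and FM: "\<And>g. g = sum (FM g) (DM g)"
    using graded_moduleD(5)[OF M] by metis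
  note sub = graded_moduleD(2)[OF M]
  define U where "U = (\<Union>g\<in>GM. DM g)"
  define t0 where "t0 = (\<lambda>i. Max (insert 0 ((\<lambda>u. u i) ` U)))"
  have le_t0: "u \<le> t0" if "u \<in> U" for u
    using that GM DM(1) unfolding t0_def U_def le_fun_def by (auto intro: Max_ge)
  have propagation: "Mg t' = {0}" if t: "t0 \<le> t" "t \<le> t'" "Mg t = {0}" for t t'
  proof -
    have term_off_component: "act r (FM g u) \<in> off_component Mg t'" if "g \<in> GM" "u \<in> DM g" for r g u
    proof (rule act_off_component_above_vanishing[OF M, OF _ DM(2)[OF that(2)] _ t(2,3)])
      show "r \<in> sums_hom_in_lower_ideals Rg"
        using standard_graded_algebra_eq_sums_hom_in_lower_ideals[OF R] by simp
      have "u \<in> U"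
        using that unfolding U_def by blast
      then show "u \<le> t"
        using le_t0 t(1) by (blast intro: order_trans)
    qed
    have "m = 0" if m: "m \<in> Mg t'" for m
    proof -
      obtain c where "m = (\<Sum>g\<in>GM. act (c g) g)"
        using gens by blast
      also have "\<dots> = (\<Sum>g\<in>GM. \<Sum>u\<in>DM g. act (c g) (FM g u))"
        by (subst FM) (simp add: module.scale_sum_right[OF graded_moduleD(1)[OF M]])
      also have "\<dots> \<in> off_component Mg t'"
      proof (rule off_component_sum[OF sub GM])
        fix g assume "g \<in> GM"
        then show "(\<Sum>u\<in>DM g. act (c g) (FM g u)) \<in> off_component Mg t'"
          using term_off_component by (intro off_component_sum[OF sub DM(1)]) blast
      qed
      finally show "m = 0"
        by (rule independent_off_component_eq_zero[OF sub graded_moduleD(3)[OF M], OF m])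
    qed
    moreover have "0 \<in> Mg t'"
      using sub unfolding subgroup_family_def by blast
    ultimately show ?thesis by blast
  qed
  show ?thesis by (rule that[OF propagation])
qed

theorem lemma2p5:
  fixes \<phi> :: "'a::comm_ring_1 \<Rightarrow> 'r::comm_ring_1"
    and Rg :: "('s::finite \<Rightarrow> nat) \<Rightarrow> 'r set"
    and act :: "'r \<Rightarrow> 'm::ab_group_add \<Rightarrow> 'm"
    and Mg :: "('s \<Rightarrow> int) \<Rightarrow> 'm set"
  assumes "fg_standard_graded_algebra \<phi> Rg"
    and "graded_module Rg act Mg"
    and "fin_gen_module act"
  shows "(\<exists>t0::'s \<Rightarrow> int. \<forall>t. (\<forall>i. t0 i \<le> t i) \<longrightarrow> Mg t = {0})
       \<or> (\<exists>t0::'s \<Rightarrow> int. \<forall>t. (\<forall>i. t0 i \<le> t i) \<longrightarrow> Mg t \<noteq> {0})"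
proof -
  obtain t0 where t0: "\<And>t t'. t0 \<le> t \<Longrightarrow> t \<le> t' \<Longrightarrow> Mg t = {0} \<Longrightarrow> Mg t' = {0}"
    using fg_graded_module_vanishing_propagates[OF assms] by blast
  show ?thesis
  proof (cases "\<exists>t \<ge> t0. Mg t = {0}")
    case True
    then obtain t where "t0 \<le> t" "Mg t = {0}" by blast
    then have "\<forall>t'. (\<forall>i. t i \<le> t' i) \<longrightarrow> Mg t' = {0}"
      using t0 by (simp add: le_fun_def)
    then show ?thesis by blast
  next
    case False
    then have "\<forall>t. (\<forall>i. t0 i \<le> t i) \<longrightarrow> Mg t \<noteq> {0}"
      by (auto simp: le_fun_def)
    then show ?thesis by blast
  qed
qed

end
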